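(* Let $\Gamma=(a_1\to\dots\to a_m\to b_m\to\dots\to b_1\to a_1)$ be a closed polygonal curve in the plane such that (i) the vectors $a_i-b_i$, $i=1,\dots,m$, all have the same direction (it is allowed that $a_1=b_1$ or $a_m=b_m$); (ii) the euclidean lengths $|a_i-b_i|$ form a unimodal sequence, i.e. there is $j$ such that the sequence is non-decreasing for $1\le i\le j$ and non-increasing for $j\le i\le m$. Then $\mathcal{A}(\Gamma)\le\operatorname{area}(\operatorname{conv}(\Gamma))$.
   Context: For vectors $s=(s_1,s_2)$, $t=(t_1,t_2)$ let $s\vee t=s_1t_2-s_2t_1$. For a closed polygonal curve $\gamma=(v_1\to\dots\to v_n\to v_{n+1}=v_1)$, its enclosed area is $\mathcal{A}(\gamma)=\frac12\sum_{i=1}^n v_i\vee v_{i+1}$ (equivalently, the sum over regions of the complement of $\gamma$ of the winding number times the area). "Same direction" means positive multiples of one common nonzero vector. *)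

theory Defs
  imports "HOL-Analysis.Analysis"
begin

definition wedge :: "real \<times> real \<Rightarrow> real \<times> real \<Rightarrow> real" where
  "wedge s t = fst s * snd t - snd s * fst t"

definition poly_area :: "(real \<times> real) list \<Rightarrow> real" where
  "poly_area vs = (1/2) * (\<Sum>i<length vs. wedge (vs ! i) (vs ! ((i + 1) mod length vs)))"

definition poly_curve :: "(real \<times> real) list \<Rightarrow> (real \<times> real) set" where
  "poly_curve vs = (\<Union>i<length vs. closed_segment (vs ! i) (vs ! ((i + 1) mod length vs)))"

definition gamma_vertices :: "nat \<Rightarrow> (nat \<Rightarrow> real \<times> real) \<Rightarrow> (nat \<Rightarrow> real \<times> real) \<Rightarrow> (real \<times> real) list" where
  "gamma_vertices m a b = map a [1..<m+1] @ map b (rev [1..<m+1])"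

end

theory Submission
  imports Defs
begin

(* After an area-preserving linear change of coordinates (a product of shears) the segments
   from b_i to a_i are vertical: a_i = b_i + (0, c_i) with b_i = (x_i, y_i).  The shoelace formula
   then gives A(Gamma) = sum_i (x_i - x_(i+1)) (c_i + c_(i+1)) / 2 = integral_0^(c_j) w(t) dt, where
   j is the peak of the unimodal sequence c and w(t) is the signed horizontal distance at height t
   between the two chains (x_i, c_i), i <= j and i >= j, descending from the peak.  Let K be the
   convex hull of Gamma.  The pairs (x, t) such that K contains a vertical segment of length t above
   x form a convex set containing all (x_i, c_i), hence both chains and everything between them.
   So every vertical section of K is at least as long as the set of heights at which its abscissa
   lies between the chains, and Fubini gives area(K) >= integral_0^(c_j) max(w(t), 0) dt
   >= A(Gamma). *)

section \<open>Shoelace formula for the curve\<close>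

lemma wedge_commute: "wedge x y = - wedge y x"
  by (simp add: wedge_def)

fun polyline_wedge_sum :: "(real \<times> real) list \<Rightarrow> real" where
  "polyline_wedge_sum [] = 0"
| "polyline_wedge_sum [x] = 0"
| "polyline_wedge_sum (x # y # zs) = wedge x y + polyline_wedge_sum (y # zs)"

lemma polyline_wedge_sum_conv_nth:
  "polyline_wedge_sum vs = (\<Sum>i<length vs - 1. wedge (vs ! i) (vs ! Suc i))"
proof (induction vs rule: polyline_wedge_sum.induct)
  case (3 x y zs)
  then show ?case
    by (simp only: length_Cons diff_Suc_1 sum.lessThan_Suc_shift) simp
qed simp_all

lemma poly_area_conv_polyline_wedge_sum:
  assumes "vs \<noteq> []"
  shows "2 * poly_area vs = polyline_wedge_sum vs + wedge (last vs) (hd vs)"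
proof -
  obtain n where n: "length vs = Suc n"
    using assms by (cases vs) auto
  have "(\<Sum>i<n. wedge (vs ! i) (vs ! ((i + 1) mod length vs))) = (\<Sum>i<n. wedge (vs ! i) (vs ! Suc i))"
    by (intro sum.cong) (auto simp: n)
  then show ?thesis
    using assms by (simp add: poly_area_def n polyline_wedge_sum_conv_nth last_conv_nth hd_conv_nth)
qed

lemma polyline_wedge_sum_append:
  "xs \<noteq> [] \<Longrightarrow> ys \<noteq> [] \<Longrightarrow>
    polyline_wedge_sum (xs @ ys) = polyline_wedge_sum xs + wedge (last xs) (hd ys) + polyline_wedge_sum ys"
proof (induction xs rule: polyline_wedge_sum.induct)
  case (2 x)
  then show ?case by (cases ys) auto
qed auto

lemma polyline_wedge_sum_rev: "polyline_wedge_sum (rev xs) = - polyline_wedge_sum xs"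
proof (induction xs rule: polyline_wedge_sum.induct)
  case (3 x y zs)
  have "polyline_wedge_sum (rev (x # y # zs)) = polyline_wedge_sum (rev (y # zs) @ [x])"
    by simp
  also have "\<dots> = polyline_wedge_sum (rev (y # zs)) + wedge y x"
    by (subst polyline_wedge_sum_append) (auto simp: last_rev)
  finally show ?case
    using 3 by (simp add: wedge_commute[of y x])
qed auto

lemma polyline_wedge_sum_map_upt:
  "1 \<le> m \<Longrightarrow> polyline_wedge_sum (map a [1..<Suc m]) = (\<Sum>i=1..<m. wedge (a i) (a (Suc i)))"
proof (induction m rule: nat_induct_at_least)
  case (Suc m)
  have "map a [1..<Suc (Suc m)] = map a [1..<Suc m] @ [a (Suc m)]"
    by simp
  then show ?case
    using Suc by (simp del: upt_Suc add: polyline_wedge_sum_append last_map)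
qed simp

lemma poly_area_gamma_vertices:
  assumes "1 \<le> m"
  shows "2 * poly_area (gamma_vertices m a b) =
    (\<Sum>i=1..<m. wedge (a i) (a (Suc i)) - wedge (b i) (b (Suc i))) + wedge (a m) (b m) + wedge (b 1) (a 1)"
proof -
  let ?A = "map a [1..<Suc m]" and ?B = "map b [1..<Suc m]"
  have ends: "last ?A = a m" "hd (rev ?B) = b m" "last (?A @ rev ?B) = b 1" "hd (?A @ rev ?B) = a 1"
    using assms by (simp_all add: last_map hd_rev last_rev hd_map hd_append del: upt_Suc)
  have "2 * poly_area (gamma_vertices m a b) = polyline_wedge_sum ?A + wedge (a m) (b m)
      - polyline_wedge_sum ?B + wedge (b 1) (a 1)"
    using assms ends
    by (simp add: gamma_vertices_def rev_map[symmetric] poly_area_conv_polyline_wedge_sum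
        polyline_wedge_sum_append polyline_wedge_sum_rev del: upt_Suc)
  then show ?thesis
    using polyline_wedge_sum_map_upt[OF assms, of a] polyline_wedge_sum_map_upt[OF assms, of b]
    by (simp add: sum_subtractf del: upt_Suc)
qed

lemma poly_area_gamma_vertices_vertical:
  assumes "1 \<le> m" and "\<And>i. i \<in> {1..m} \<Longrightarrow> a i - b i = (0, c i)"
  shows "poly_area (gamma_vertices m a b)
    = (\<Sum>i=1..<m. (fst (b i) - fst (b (Suc i))) * ((c i + c (Suc i)) / 2))"
proof -
  have ab: "a i = (fst (b i), snd (b i) + c i)" if "i \<in> {1..m}" for i
    using assms(2)[OF that] by (simp add: prod_eq_iff algebra_simps)
  have "2 * poly_area (gamma_vertices m a b)
      = (\<Sum>i=1..<m. (fst (b i) - fst (b (Suc i))) * (c i + c (Suc i)))"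
    unfolding poly_area_gamma_vertices[OF \<open>1 \<le> m\<close>]
    using \<open>1 \<le> m\<close> ab
  proof (induction m rule: nat_induct_at_least)
    case base
    then show ?case
      using base.prems[of 1] by (simp add: wedge_def algebra_simps)
  next
    case (Suc m)
    then show ?case
      using Suc.prems[of m] Suc.prems[of "Suc m"] by (simp add: wedge_def algebra_simps)
  qed
  then show ?thesis
    by (simp add: sum_divide_distrib[symmetric])
qed

lemma poly_area_map:
  assumes "\<And>p q. wedge (f p) (f q) = wedge p q"
  shows "poly_area (map f vs) = poly_area vs"
proof -
  have "(i + 1) mod length vs < length vs" if "i < length vs" for i
    using that by (intro mod_less_divisor) auto
  then show ?thesis
    unfolding poly_area_def by (auto simp: assms intro!: sum.cong)
qed

lemma poly_curve_map:
  assumes "linear f"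
  shows "poly_curve (map f vs) = f ` poly_curve vs"
proof -
  have "(i + 1) mod length vs < length vs" if "i < length vs" for i
    using that by (intro mod_less_divisor) auto
  then show ?thesis
    unfolding poly_curve_def image_UN
    by (auto simp: closed_segment_linear_image[OF assms] intro!: SUP_cong)
qed

lemma gamma_vertices_comp: "gamma_vertices m (f \<circ> a) (f \<circ> b) = map f (gamma_vertices m a b)"
  by (simp add: gamma_vertices_def)

lemma compact_poly_curve: "compact (poly_curve vs)"
  unfolding poly_curve_def by (intro compact_UN) auto

lemma set_subset_poly_curve: "set vs \<subseteq> poly_curve vs"
proof
  fix v assume "v \<in> set vs"
  then obtain i where "i < length vs" "v = vs ! i"
    by (metis in_set_conv_nth)
  then show "v \<in> poly_curve vs"
    unfolding poly_curve_def by blast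
qed

lemma set_gamma_vertices: "set (gamma_vertices m a b) = a ` {1..m} \<union> b ` {1..m}"
  by (auto simp: gamma_vertices_def)

section \<open>Area-preserving linear maps\<close>

definition vshear :: "real \<Rightarrow> real \<times> real \<Rightarrow> real \<times> real" where
  "vshear k p = (fst p, snd p + k * fst p)"

definition hshear :: "real \<Rightarrow> real \<times> real \<Rightarrow> real \<times> real" where
  "hshear k p = (fst p + k * snd p, snd p)"

lemma continuous_vimage_borel:
  fixes f :: "'a::topological_space \<Rightarrow> 'b::topological_space"
  shows "continuous_on UNIV f \<Longrightarrow> C \<in> sets borel \<Longrightarrow> f -` C \<in> sets borel"
  using measurable_sets[OF borel_measurable_continuous_onI] by fastforce

lemma emeasure_lborel_translation_vimage:
  fixes A :: "real set"
  assumes "A \<in> sets borel"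
  shows "emeasure lborel ((\<lambda>y. y + c) -` A) = emeasure lborel A"
proof -
  have "emeasure (distr lborel borel ((+) c)) A = emeasure lborel ((+) c -` A \<inter> space lborel)"
    using assms by (intro emeasure_distr) auto
  moreover have "(+) c -` A \<inter> space lborel = (\<lambda>y. y + c) -` A"
    by (auto simp: add.commute)
  ultimately show ?thesis
    by (simp add: lborel_distr_plus)
qed

lemma emeasure_vshear_vimage:
  assumes C: "C \<in> sets borel"
  shows "emeasure lborel (vshear k -` C) = emeasure lborel C"
proof -
  have sets: "sets (lborel \<Otimes>\<^sub>M lborel) = sets (borel :: (real \<times> real) measure)"
    by (simp only: lborel_prod sets_lborel)
  have "vshear k -` C \<in> sets borel"
    unfolding vshear_def by (intro continuous_vimage_borel C continuous_intros)
  then have "emeasure lborel (vshear k -` C)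
      = (\<integral>\<^sup>+x. emeasure lborel (Pair x -` vshear k -` C) \<partial>lborel)"
    using lborel.emeasure_pair_measure_alt[of "vshear k -` C" lborel] sets by (simp add: lborel_prod)
  also have "\<dots> = (\<integral>\<^sup>+x. emeasure lborel ((\<lambda>y. y + k * x) -` (Pair x -` C)) \<partial>lborel)"
    by (simp add: vshear_def vimage_def)
  also have "\<dots> = (\<integral>\<^sup>+x. emeasure lborel (Pair x -` C) \<partial>lborel)"
  proof (intro nn_integral_cong emeasure_lborel_translation_vimage)
    show "Pair x -` C \<in> sets borel" for x
      by (intro continuous_vimage_borel C continuous_intros)
  qed
  also have "\<dots> = emeasure lborel C"
    using lborel.emeasure_pair_measure_alt[of C lborel] C sets by (simp add: lborel_prod)
  finally show ?thesis .
qed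

lemma emeasure_swap_vimage:
  assumes C: "C \<in> sets borel"
  shows "emeasure lborel (prod.swap -` C) = emeasure (lborel :: (real \<times> real) measure) C"
proof -
  let ?M = "lborel \<Otimes>\<^sub>M (lborel :: real measure)" and ?swap = "\<lambda>(x :: real, y :: real). (y, x)"
  have "C \<in> sets ?M"
    using C by (simp only: lborel_prod sets_lborel)
  then have "emeasure (distr ?M ?M ?swap) C = emeasure ?M (?swap -` C \<inter> space ?M)"
    using measurable_pair_swap' by (rule emeasure_distr[rotated])
  moreover have "?swap -` C \<inter> space ?M = prod.swap -` C"
    by (auto simp: space_pair_measure)
  moreover have "emeasure (distr ?M ?M ?swap) C = emeasure ?M C"
    by (simp only: lborel_pair.distr_pair_swap[symmetric])
  ultimately show ?thesis
    by (simp add: lborel_prod)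
qed

lemma hshear_conv_vshear: "hshear k = prod.swap \<circ> vshear k \<circ> prod.swap"
  by (simp add: fun_eq_iff hshear_def vshear_def)

lemma emeasure_hshear_vimage:
  assumes C: "C \<in> sets borel"
  shows "emeasure lborel (hshear k -` C) = emeasure lborel C"
proof -
  have swap_borel: "prod.swap -` A \<in> sets borel" if "A \<in> sets borel" for A :: "(real \<times> real) set"
    using that by (intro continuous_vimage_borel continuous_intros)
  have vshear_borel: "vshear k -` A \<in> sets borel" if "A \<in> sets borel" for A
    using that unfolding vshear_def by (intro continuous_vimage_borel continuous_intros)
  have "emeasure lborel (hshear k -` C) = emeasure lborel (prod.swap -` vshear k -` prod.swap -` C)"
    by (simp add: hshear_conv_vshear vimage_comp)
  also have "\<dots> = emeasure lborel C"
    using C by (simp add: emeasure_swap_vimage emeasure_vshear_vimage swap_borel vshear_borel)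
  finally show ?thesis .
qed

(* For a linear map, preserving the wedge means determinant 1; measure preservation is recorded
   separately because it is only established for shears. *)
definition area_preserving :: "(real \<times> real \<Rightarrow> real \<times> real) \<Rightarrow> bool" where
  "area_preserving f \<longleftrightarrow> linear f \<and> (\<forall>p q. wedge (f p) (f q) = wedge p q) \<and>
     (\<forall>C. compact C \<longrightarrow> measure lebesgue (f ` C) = measure lebesgue C)"

lemma area_preservingD:
  assumes "area_preserving f"
  shows "linear f" "wedge (f p) (f q) = wedge p q"
    and "compact C \<Longrightarrow> measure lebesgue (f ` C) = measure lebesgue C"
  using assms unfolding area_preserving_def by blast+

lemma area_preserving_comp:
  assumes "area_preserving f" "area_preserving g"
  shows "area_preserving (f \<circ> g)"
  unfolding area_preserving_def
proof (intro conjI allI impI)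
  show "linear (f \<circ> g)"
    using assms by (intro linear_compose) (simp_all add: area_preservingD)
  show "wedge ((f \<circ> g) p) ((f \<circ> g) q) = wedge p q" for p q
    using assms by (simp add: area_preservingD)
  show "measure lebesgue ((f \<circ> g) ` C) = measure lebesgue C" if "compact C" for C
  proof -
    have "compact (g ` C)"
      using assms(2) that
      by (intro compact_continuous_image linear_continuous_on)
        (simp_all add: area_preservingD linear_conv_bounded_linear[symmetric])
    then have "measure lebesgue (f ` g ` C) = measure lebesgue C"
      using assms that by (simp add: area_preservingD)
    then show ?thesis
      by (simp add: image_comp)
  qed
qed

lemma measure_image_by_measure_preserving_inverse:
  assumes "\<And>p. g (f p) = p" "\<And>p. f (g p) = p"
    and "continuous_on UNIV g" "compact C"
    and "\<And>A. A \<in> sets borel \<Longrightarrow> emeasure lborel (g -` A) = emeasure lborel A"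
  shows "measure lebesgue (f ` C) = measure lebesgue C"
proof -
  have "f ` C = g -` C"
    using assms(1,2) by (auto intro: rev_image_eqI)
  moreover have C: "C \<in> sets borel"
    using \<open>compact C\<close> by (simp add: borel_compact)
  moreover have "g -` C \<in> sets borel"
    using assms(3) C by (rule continuous_vimage_borel)
  ultimately show ?thesis
    using assms(5)[OF C] by (simp add: measure_def)
qed

lemma area_preserving_vshear: "area_preserving (vshear k)"
  unfolding area_preserving_def
proof (intro conjI allI impI)
  show "linear (vshear k)"
    by (auto intro!: linearI simp: vshear_def algebra_simps)
  show "wedge (vshear k p) (vshear k q) = wedge p q" for p q
    by (simp add: vshear_def wedge_def algebra_simps)
  show "measure lebesgue (vshear k ` C) = measure lebesgue C" if "compact C" for C
  proof (rule measure_image_by_measure_preserving_inverse[OF _ _ _ that emeasure_vshear_vimage])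
    show "continuous_on UNIV (vshear (- k))"
      unfolding vshear_def by (intro continuous_intros)
  qed (simp_all add: vshear_def)
qed

lemma area_preserving_hshear: "area_preserving (hshear k)"
  unfolding area_preserving_def
proof (intro conjI allI impI)
  show "linear (hshear k)"
    by (auto intro!: linearI simp: hshear_def algebra_simps)
  show "wedge (hshear k p) (hshear k q) = wedge p q" for p q
    by (simp add: hshear_def wedge_def algebra_simps)
  show "measure lebesgue (hshear k ` C) = measure lebesgue C" if "compact C" for C
  proof (rule measure_image_by_measure_preserving_inverse[OF _ _ _ that emeasure_hshear_vimage])
    show "continuous_on UNIV (hshear (- k))"
      unfolding hshear_def by (intro continuous_intros)
  qed (simp_all add: hshear_def)
qed

lemma area_preserving_to_vertical:
  assumes "d \<noteq> 0"
  obtains f where "area_preserving f" "f d = (0, 1)"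
proof -
  have nonvertical: "\<exists>f. area_preserving f \<and> f d = (0, 1)" if "fst d \<noteq> 0" for d
  proof -
    define k where "k = (1 - snd d) / fst d"
    have "vshear k d = (fst d, 1)"
      using that by (simp add: vshear_def k_def field_simps)
    then have "(hshear (- fst d) \<circ> vshear k) d = (0, 1)"
      by (simp add: hshear_def)
    moreover have "area_preserving (hshear (- fst d) \<circ> vshear k)"
      by (intro area_preserving_comp area_preserving_hshear area_preserving_vshear)
    ultimately show ?thesis
      by blast
  qed
  show ?thesis
  proof (cases "fst d = 0")
    case True
    then have "fst (hshear 1 d) \<noteq> 0"
      using assms by (simp add: hshear_def prod_eq_iff)
    then obtain f where "area_preserving f" "f (hshear 1 d) = (0, 1)"
      using nonvertical by blast
    then show ?thesis
      using that[of "f \<circ> hshear 1"] by (simp add: area_preserving_comp area_preserving_hshear)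
  qed (use nonvertical that in blast)
qed

lemma measure_convex_hull_poly_curve_map:
  assumes "area_preserving f"
  shows "measure lebesgue (convex hull (poly_curve (map f vs))) = measure lebesgue (convex hull (poly_curve vs))"
proof -
  have "convex hull (poly_curve (map f vs)) = f ` (convex hull (poly_curve vs))"
    using area_preservingD(1)[OF assms] by (simp add: poly_curve_map convex_hull_linear_image)
  then show ?thesis
    by (simp add: area_preservingD(3)[OF assms] compact_convex_hull compact_poly_curve)
qed

section \<open>Monotone polygonal chains by height\<close>

definition ramp :: "real \<Rightarrow> real \<Rightarrow> real \<Rightarrow> real" where
  "ramp lo hi t = (if t \<le> lo then 1 else if hi \<le> t then 0 else (hi - t) / (hi - lo))"

lemma ramp_nonneg: "lo \<le> hi \<Longrightarrow> 0 \<le> ramp lo hi t"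
  by (auto simp: ramp_def)

lemma ramp_le_1: "lo \<le> hi \<Longrightarrow> ramp lo hi t \<le> 1"
  by (auto simp: ramp_def field_simps)

lemma ramp_eq_1: "t \<le> lo \<Longrightarrow> ramp lo hi t = 1"
  by (simp add: ramp_def)

lemma ramp_eq_0: "lo < t \<Longrightarrow> hi \<le> t \<Longrightarrow> ramp lo hi t = 0"
  by (simp add: ramp_def)

lemma le_ramp_interpolation:
  assumes "lo \<le> hi" "t \<le> hi"
  shows "t \<le> (1 - ramp lo hi t) * hi + ramp lo hi t * lo"
  using assms by (auto simp: ramp_def field_simps)

lemma ramp_measurable [measurable]: "ramp lo hi \<in> borel_measurable borel"
  unfolding ramp_def by measurable

lemma ramp_has_integral:
  assumes "0 \<le> lo" "lo \<le> hi" "hi \<le> T"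
  shows "(ramp lo hi has_integral (lo + hi) / 2) {0..T}"
proof -
  have "((\<lambda>t. 1::real) has_integral lo) {0..lo}"
    using has_integral_const_real[of "1::real" 0 lo] assms by simp
  then have below: "(ramp lo hi has_integral lo) {0..lo}"
    by (rule has_integral_spike_finite[where S="{}", rotated 2]) (auto simp: ramp_def)
  have between: "(ramp lo hi has_integral (hi - lo) / 2) {lo..hi}"
  proof (cases "lo = hi")
    case False
    then have "lo < hi" using assms by simp
    define k where "k = 1 / (2 * (hi - lo))"
    have "((\<lambda>t. - k * (hi - t)\<^sup>2) has_real_derivative (hi - t) / (hi - lo)) (at t within {lo..hi})"
      for t
    proof -
      have "2 * k * (hi - t) = (hi - t) / (hi - lo)"
        using \<open>lo < hi\<close> by (simp add: k_def field_simps)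
      then show ?thesis
        by (auto intro!: derivative_eq_intros simp: algebra_simps)
    qed
    then have "((\<lambda>t. (hi - t) / (hi - lo)) has_integral
               - k * (hi - hi)\<^sup>2 - (- k * (hi - lo)\<^sup>2)) {lo..hi}"
      using \<open>lo < hi\<close>
      by (intro fundamental_theorem_of_calculus)
        (auto simp: has_real_derivative_iff_has_vector_derivative[symmetric])
    moreover have "- k * (hi - hi)\<^sup>2 - (- k * (hi - lo)\<^sup>2) = (hi - lo) / 2"
      using \<open>lo < hi\<close> by (simp add: k_def power2_eq_square field_simps)
    ultimately have "((\<lambda>t. (hi - t) / (hi - lo)) has_integral (hi - lo) / 2) {lo..hi}"
      by metis
    then show ?thesis
      by (rule has_integral_spike_finite[where S="{}", rotated 2])
        (use \<open>lo < hi\<close> in \<open>auto simp: ramp_def\<close>)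
  qed (simp add: has_integral_refl)
  have above: "(ramp lo hi has_integral 0) {hi..T}"
    by (rule has_integral_spike_finite[where S="{hi}" and f="\<lambda>_. 0"])
      (use assms in \<open>auto simp: ramp_def\<close>)
  have "(ramp lo hi has_integral lo + (hi - lo) / 2 + 0) {0..T}"
    using assms by (intro has_integral_combine[OF _ _ has_integral_combine[OF _ _ below between] above]) auto
  then show ?thesis
    by (simp add: field_simps)
qed

(* The fraction of the segment from height H i to height H (Suc i) lying at height t or above. *)
definition above_fraction :: "(nat \<Rightarrow> real) \<Rightarrow> nat \<Rightarrow> real \<Rightarrow> real" where
  "above_fraction H i = ramp (min (H i) (H (Suc i))) (max (H i) (H (Suc i)))"

lemma above_fraction_nonneg: "0 \<le> above_fraction H i t"
  by (simp add: above_fraction_def ramp_nonneg)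

lemma above_fraction_le_1: "above_fraction H i t \<le> 1"
  by (simp add: above_fraction_def ramp_le_1)

lemma above_fraction_measurable [measurable]: "above_fraction H i \<in> borel_measurable borel"
  by (simp add: above_fraction_def)

lemma above_fraction_has_integral:
  assumes "0 \<le> H i" "0 \<le> H (Suc i)" "H i \<le> T" "H (Suc i) \<le> T"
  shows "(above_fraction H i has_integral (H i + H (Suc i)) / 2) {0..T}"
proof (cases "H i \<le> H (Suc i)")
  case True
  then show ?thesis
    using ramp_has_integral[of "H i" "H (Suc i)" T] assms by (simp add: above_fraction_def)
next
  case False
  then show ?thesis
    using ramp_has_integral[of "H (Suc i)" "H i" T] assms by (simp add: above_fraction_def add.commute)
qed

lemma sum_above_fraction_telescope:
  assumes "antimono_on {p..q} H" "p \<le> q" "t \<le> H q"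
  shows "(\<Sum>i=p..<q. (X (Suc i) - X i) * above_fraction H i t) = X q - X p"
proof -
  have "above_fraction H i t = 1" if "i \<in> {p..<q}" for i
    using monotone_onD[OF assms(1), of i q] monotone_onD[OF assms(1), of "Suc i" q] that assms(3)
    by (simp add: above_fraction_def ramp_eq_1)
  then show ?thesis
    using assms(2) by (simp add: sum_Suc_diff')
qed

(* The point is the one at height t on the chain through (X p, H p), ..., (X q, H q), walked
   down from its top vertex (X p, H p); below H q it stays at abscissa X q. *)
lemma descending_chain_point_mem:
  fixes S :: "(real \<times> real) set" and X H :: "nat \<Rightarrow> real"
  assumes "convex S"
    and down: "\<And>x t t'. (x, t) \<in> S \<Longrightarrow> 0 \<le> t' \<Longrightarrow> t' \<le> t \<Longrightarrow> (x, t') \<in> S"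
    and "p \<le> q"
    and vertices: "\<And>i. i \<in> {p..q} \<Longrightarrow> (X i, H i) \<in> S"
    and "antimono_on {p..q} H"
    and t: "0 \<le> t" "t \<le> H p"
  shows "(X p + (\<Sum>i=p..<q. (X (Suc i) - X i) * above_fraction H i t), t) \<in> S"
  using \<open>p \<le> q\<close> vertices \<open>antimono_on {p..q} H\<close>
proof (induction q rule: dec_induct)
  case base
  then show ?case
    using down t by simp
next
  case (step q)
  have anti: "antimono_on {p..q} H"
    using step.prems(2) by (rule monotone_on_subset) auto
  have H_q: "H (Suc q) \<le> H q"
    using monotone_onD[OF step.prems(2), of q "Suc q"] step.hyps by simp
  define u where "u = above_fraction H q t"
  have u_eq: "u = ramp (H (Suc q)) (H q) t"
    using H_q by (simp add: u_def above_fraction_def)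
  have sum_eq: "(\<Sum>i=p..<Suc q. (X (Suc i) - X i) * above_fraction H i t)
      = (\<Sum>i=p..<q. (X (Suc i) - X i) * above_fraction H i t) + (X (Suc q) - X q) * u"
    using step.hyps by (simp add: u_def)
  show ?case
  proof (cases "t \<le> H q")
    case True
    have point: "X p + (\<Sum>i=p..<Suc q. (X (Suc i) - X i) * above_fraction H i t)
        = (1 - u) * X q + u * X (Suc q)"
      unfolding sum_eq sum_above_fraction_telescope[OF anti step.hyps(1) True] by (simp add: algebra_simps)
    have "0 \<le> u" "u \<le> 1"
      by (simp_all add: u_def above_fraction_nonneg above_fraction_le_1)
    then have "(1 - u) *\<^sub>R (X q, H q) + u *\<^sub>R (X (Suc q), H (Suc q)) \<in> S"
      using step.hyps by (intro convexD_alt \<open>convex S\<close> step.prems(1)) auto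
    moreover have "t \<le> (1 - u) * H q + u * H (Suc q)"
      using le_ramp_interpolation[OF H_q True] by (simp add: u_eq)
    ultimately show ?thesis
      using down t point by fastforce
  next
    case False
    then have "u = 0"
      using H_q by (simp add: u_eq ramp_eq_0)
    moreover have "(X p + (\<Sum>i=p..<q. (X (Suc i) - X i) * above_fraction H i t), t) \<in> S"
      using step.prems(1) anti by (intro step.IH) auto
    ultimately show ?thesis
      unfolding sum_eq by simp
  qed
qed

lemma sum_above_fraction_reflect:
  "(\<Sum>i=p..<q. (X (Suc i) - X i) * above_fraction H i t)
    = - (\<Sum>i=p..<q. (X (q + p - Suc i) - X (q + p - i)) * above_fraction (\<lambda>i. H (q + p - i)) i t)"
proof -
  have "(X (Suc (q + p - Suc i)) - X (q + p - Suc i)) * above_fraction H (q + p - Suc i) t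
      = - ((X (q + p - Suc i) - X (q + p - i)) * above_fraction (\<lambda>i. H (q + p - i)) i t)"
    if "i \<in> {p..<q}" for i
  proof -
    have "Suc (q + p - Suc i) = q + p - i"
      using that by auto
    then show ?thesis
      by (simp add: above_fraction_def min.commute max.commute algebra_simps)
  qed
  then show ?thesis
    by (subst sum.atLeastLessThan_rev) (simp add: sum_negf[symmetric])
qed

lemma ascending_chain_point_mem:
  fixes S :: "(real \<times> real) set" and X H :: "nat \<Rightarrow> real"
  assumes "convex S"
    and down: "\<And>x t t'. (x, t) \<in> S \<Longrightarrow> 0 \<le> t' \<Longrightarrow> t' \<le> t \<Longrightarrow> (x, t') \<in> S"
    and "p \<le> q"
    and vertices: "\<And>i. i \<in> {p..q} \<Longrightarrow> (X i, H i) \<in> S"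
    and "mono_on {p..q} H"
    and t: "0 \<le> t" "t \<le> H q"
  shows "(X q - (\<Sum>i=p..<q. (X (Suc i) - X i) * above_fraction H i t), t) \<in> S"
proof -
  have reflect: "q + p - i \<in> {p..q}" if "i \<in> {p..q}" for i
    using that by auto
  have "antimono_on {p..q} (\<lambda>i. H (q + p - i))"
  proof (rule monotone_onI)
    fix i k assume "i \<in> {p..q}" "k \<in> {p..q}" "i \<le> k"
    then show "H (q + p - k) \<le> H (q + p - i)"
      using mono_onD[OF \<open>mono_on {p..q} H\<close>] reflect by simp
  qed
  then have "(X q + (\<Sum>i=p..<q. (X (q + p - Suc i) - X (q + p - i))
        * above_fraction (\<lambda>i. H (q + p - i)) i t), t) \<in> S"
    using descending_chain_point_mem[OF \<open>convex S\<close> down \<open>p \<le> q\<close>,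
        where X="\<lambda>i. X (q + p - i)" and H="\<lambda>i. H (q + p - i)"] vertices reflect t by simp
  then show ?thesis
    by (simp add: sum_above_fraction_reflect)
qed

section \<open>Vertical chords of a convex set\<close>

definition vertical_chord :: "(real \<times> real) set \<Rightarrow> real \<Rightarrow> real \<Rightarrow> bool" where
  "vertical_chord K x t \<longleftrightarrow> (\<exists>y. (x, y) \<in> K \<and> (x, y + t) \<in> K)"

lemma convex_slice:
  fixes K :: "('a::real_vector \<times> 'b::real_vector) set"
  assumes "convex K"
  shows "convex (Pair x -` K)"
  unfolding convex_alt
proof (intro ballI allI impI)
  fix y1 y2 :: 'b and u :: real
  assume "y1 \<in> Pair x -` K" "y2 \<in> Pair x -` K" "0 \<le> u \<and> u \<le> 1"
  then have "(1 - u) *\<^sub>R (x, y1) + u *\<^sub>R (x, y2) \<in> K"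
    using assms by (intro convexD_alt) auto
  then show "(1 - u) *\<^sub>R y1 + u *\<^sub>R y2 \<in> Pair x -` K"
    by (simp add: algebra_simps)
qed

lemma compact_slice:
  fixes K :: "('a::t1_space \<times> 'b::topological_space) set"
  assumes "compact K"
  shows "compact (Pair x -` K)"
proof -
  have "Pair x -` K = snd ` (K \<inter> {x} \<times> UNIV)"
    by (auto intro: rev_image_eqI)
  moreover have "compact (K \<inter> {x} \<times> UNIV)"
    using assms by (intro compact_Int_closed closed_Times) auto
  ultimately show ?thesis
    by (simp add: compact_continuous_image continuous_on_snd)
qed

lemma interval_subset_slice:
  fixes K :: "('a::real_vector \<times> real) set"
  assumes "convex K" "(x, y) \<in> K" "(x, y + t) \<in> K" "0 \<le> t"
  shows "{y..y + t} \<subseteq> Pair x -` K"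
proof -
  have "closed_segment y (y + t) \<subseteq> Pair x -` K"
    using convex_slice[OF \<open>convex K\<close>] assms(2,3) by (simp add: convex_contains_segment)
  then show ?thesis
    using \<open>0 \<le> t\<close> by (simp add: closed_segment_eq_real_ivl)
qed

lemma vertical_chord_shorten:
  assumes "convex K" "vertical_chord K x t" "0 \<le> t'" "t' \<le> t"
  shows "vertical_chord K x t'"
proof -
  obtain y where y: "(x, y) \<in> K" "(x, y + t) \<in> K"
    using assms(2) by (auto simp: vertical_chord_def)
  have "y + t' \<in> {y..y + t}"
    using assms(3,4) by simp
  then have "y + t' \<in> Pair x -` K"
    using interval_subset_slice[OF \<open>convex K\<close> y] assms(3,4) by (meson order_trans subsetD)
  then show ?thesis
    using y by (auto simp: vertical_chord_def)
qed

lemma convex_vertical_chords: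
  assumes "convex K"
  shows "convex {(x, t). vertical_chord K x t}"
  unfolding convex_alt
proof (clarsimp)
  fix x1 t1 x2 t2 u :: real
  assume "vertical_chord K x1 t1" "vertical_chord K x2 t2" "0 \<le> u" "u \<le> 1"
  then obtain y1 y2 where
    "(x1, y1) \<in> K" "(x1, y1 + t1) \<in> K" "(x2, y2) \<in> K" "(x2, y2 + t2) \<in> K"
    by (auto simp: vertical_chord_def)
  then have "(1 - u) *\<^sub>R (x1, y1) + u *\<^sub>R (x2, y2) \<in> K"
    and "(1 - u) *\<^sub>R (x1, y1 + t1) + u *\<^sub>R (x2, y2 + t2) \<in> K"
    using convexD_alt[OF assms _ _ \<open>0 \<le> u\<close> \<open>u \<le> 1\<close>] by blast+
  then show "vertical_chord K ((1 - u) * x1 + u * x2) ((1 - u) * t1 + u * t2)"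
    unfolding vertical_chord_def
    by (intro exI[of _ "(1 - u) * y1 + u * y2"]) (simp add: algebra_simps)
qed

lemma vertical_chord_le_measure_slice:
  assumes "compact K" "convex K" "vertical_chord K x t" "0 \<le> t"
  shows "t \<le> measure lborel (Pair x -` K)"
proof -
  obtain y where "(x, y) \<in> K" "(x, y + t) \<in> K"
    using assms(3) by (auto simp: vertical_chord_def)
  then have "{y..y + t} \<subseteq> Pair x -` K"
    using interval_subset_slice assms by blast
  moreover have "Pair x -` K \<in> fmeasurable lborel"
    using compact_slice[OF \<open>compact K\<close>]
    by (simp add: fmeasurable_compact)
  ultimately have "measure lborel {y..y + t} \<le> measure lborel (Pair x -` K)"
    by (intro measure_mono_fmeasurable) auto
  then show ?thesis
    using \<open>0 \<le> t\<close> by simp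
qed

definition region_between :: "real \<Rightarrow> (real \<Rightarrow> real) \<Rightarrow> (real \<Rightarrow> real) \<Rightarrow> (real \<times> real) set" where
  "region_between T Q P = {(t, x). t \<in> {0..T} \<and> Q t \<le> x \<and> x \<le> P t}"

lemma region_between_sets:
  assumes "P \<in> borel_measurable borel" "Q \<in> borel_measurable borel"
  shows "region_between T Q P \<in> sets (lborel \<Otimes>\<^sub>M lborel)"
proof -
  have "{p \<in> space (borel \<Otimes>\<^sub>M borel). fst p \<in> {0..T} \<and> Q (fst p) \<le> snd p \<and> snd p \<le> (P (fst p) :: real)}
      \<in> sets (borel \<Otimes>\<^sub>M borel)"
    using assms by measurable
  moreover have "region_between T Q P
      = {p \<in> space (borel \<Otimes>\<^sub>M borel). fst p \<in> {0..T} \<and> Q (fst p) \<le> snd p \<and> snd p \<le> P (fst p)}"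
    by (auto simp: region_between_def space_pair_measure)
  ultimately show ?thesis
    by simp
qed

lemma emeasure_region_between:
  assumes "P \<in> borel_measurable borel" "Q \<in> borel_measurable borel"
  shows "emeasure (lborel \<Otimes>\<^sub>M lborel) (region_between T Q P)
    = (\<integral>\<^sup>+t. ennreal (if t \<in> {0..T} then P t - Q t else 0) \<partial>lborel)"
proof -
  have "emeasure lborel (Pair t -` region_between T Q P) = ennreal (if t \<in> {0..T} then P t - Q t else 0)"
    for t
  proof (cases "t \<in> {0..T} \<and> Q t \<le> P t")
    case True
    then have "Pair t -` region_between T Q P = {Q t..P t}"
      by (auto simp: region_between_def)
    then show ?thesis
      using True by simp
  next
    case False
    then have "Pair t -` region_between T Q P = {}"
      by (auto simp: region_between_def)
    then show ?thesis
      using False by (auto simp: ennreal_neg)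
  qed
  then show ?thesis
    using region_between_sets[OF assms] by (simp add: lborel.emeasure_pair_measure_alt)
qed

(* Fubini in the other order: for a fixed abscissa x, the heights t with (t, x) in the region lie
   in [0, length of the vertical section of K at x]. *)
lemma nn_integral_chord_width_le_emeasure:
  fixes K :: "(real \<times> real) set" and P Q :: "real \<Rightarrow> real"
  assumes K: "compact K" "convex K"
    and P: "P \<in> borel_measurable borel" and Q: "Q \<in> borel_measurable borel"
    and chords: "\<And>t x. t \<in> {0..T} \<Longrightarrow> Q t \<le> x \<Longrightarrow> x \<le> P t \<Longrightarrow> vertical_chord K x t"
  shows "(\<integral>\<^sup>+t. ennreal (if t \<in> {0..T} then P t - Q t else 0) \<partial>lborel) \<le> emeasure lborel K"
proof -
  let ?Z = "region_between T Q P"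
  have "(\<integral>\<^sup>+t. ennreal (if t \<in> {0..T} then P t - Q t else 0) \<partial>lborel)
      = emeasure (lborel \<Otimes>\<^sub>M lborel) ?Z"
    by (rule emeasure_region_between[OF P Q, symmetric])
  also have "\<dots> = (\<integral>\<^sup>+x. emeasure lborel ((\<lambda>t. (t, x)) -` ?Z) \<partial>lborel)"
    by (rule lborel_pair.emeasure_pair_measure_alt2[OF region_between_sets[OF P Q]])
  also have "\<dots> \<le> (\<integral>\<^sup>+x. emeasure lborel (Pair x -` K) \<partial>lborel)"
  proof (intro nn_integral_mono)
    fix x :: real
    have "(\<lambda>t. (t, x)) -` ?Z \<subseteq> {0..measure lborel (Pair x -` K)}"
      using vertical_chord_le_measure_slice[OF K] chords by (auto simp: region_between_def)
    then have "emeasure lborel ((\<lambda>t. (t, x)) -` ?Z) \<le> emeasure lborel {0..measure lborel (Pair x -` K)}"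
      by (intro emeasure_mono) auto
    also have "\<dots> = emeasure lborel (Pair x -` K)"
      using compact_slice[OF \<open>compact K\<close>] by (simp add: emeasure_eq_measure2 fmeasurable_compact)
    finally show "emeasure lborel ((\<lambda>t. (t, x)) -` ?Z) \<le> emeasure lborel (Pair x -` K)" .
  qed
  also have "\<dots> = emeasure (lborel \<Otimes>\<^sub>M lborel) K"
    using K by (intro lborel.emeasure_pair_measure_alt[symmetric])
      (simp only: lborel_prod sets_lborel borel_compact)
  finally show ?thesis
    by (simp add: lborel_prod)
qed

lemma ennreal_integral_le_nn_integral:
  fixes g :: "'a \<Rightarrow> real"
  assumes "integrable M g"
  shows "ennreal (integral\<^sup>L M g) \<le> (\<integral>\<^sup>+x. ennreal (g x) \<partial>M)"
proof -
  have "integral\<^sup>L M g \<le> integral\<^sup>L M (\<lambda>x. max 0 (g x))"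
    using assms by (intro integral_mono) auto
  then have "ennreal (integral\<^sup>L M g) \<le> ennreal (integral\<^sup>L M (\<lambda>x. max 0 (g x)))"
    by (rule ennreal_leI)
  also have "\<dots> = (\<integral>\<^sup>+x. ennreal (max 0 (g x)) \<partial>M)"
    using assms by (intro nn_integral_eq_integral[symmetric]) auto
  finally show ?thesis
    by (simp add: ennreal_max_0)
qed

lemma chord_width_integral_le_measure:
  fixes K :: "(real \<times> real) set" and P Q :: "real \<Rightarrow> real"
  assumes K: "compact K" "convex K"
    and P: "P \<in> borel_measurable borel" and Q: "Q \<in> borel_measurable borel"
    and chords: "\<And>t x. t \<in> {0..T} \<Longrightarrow> Q t \<le> x \<Longrightarrow> x \<le> P t \<Longrightarrow> vertical_chord K x t"
    and integral: "((\<lambda>t. P t - Q t) has_integral I) {0..T}"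
    and bound: "\<And>t. t \<in> {0..T} \<Longrightarrow> \<bar>P t - Q t\<bar> \<le> B"
  shows "I \<le> measure lebesgue K"
proof -
  define g where "g t = (if t \<in> {0..T} then P t - Q t else 0)" for t
  have "integrable lborel g"
    using bound P Q unfolding g_def
    by (intro integrableI_bounded_set[where A="{0..T}" and B=B]) (auto simp: emeasure_lborel_Icc_eq)
  moreover have "(g has_integral I) UNIV"
    using integral unfolding g_def[abs_def] by (subst has_integral_restrict_UNIV)
  ultimately have "ennreal I \<le> (\<integral>\<^sup>+t. ennreal (g t) \<partial>lborel)"
    using ennreal_integral_le_nn_integral has_integral_integral_lborel has_integral_unique by metis
  also have "\<dots> \<le> emeasure lborel K"
    unfolding g_def by (rule nn_integral_chord_width_le_emeasure[OF K P Q chords])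
  also have "\<dots> = ennreal (measure lebesgue K)"
    using K by (simp add: emeasure_eq_measure2 fmeasurable_compact borel_compact)
  finally show ?thesis
    using measure_nonneg[of lebesgue K] by (auto simp: ennreal_le_iff2)
qed

lemma sum_above_fraction_has_integral:
  assumes "\<And>i. i \<in> {1..m} \<Longrightarrow> 0 \<le> c i \<and> c i \<le> T"
  shows "((\<lambda>t. \<Sum>i=1..<m. w i * above_fraction c i t) has_integral
           (\<Sum>i=1..<m. w i * ((c i + c (Suc i)) / 2))) {0..T}"
  using assms by (intro has_integral_sum has_integral_mult_right above_fraction_has_integral) auto

lemma abs_sum_above_fraction_le: "\<bar>\<Sum>i\<in>A. w i * above_fraction c i t\<bar> \<le> (\<Sum>i\<in>A. \<bar>w i\<bar>)"
proof -
  have "\<bar>\<Sum>i\<in>A. w i * above_fraction c i t\<bar> \<le> (\<Sum>i\<in>A. \<bar>w i * above_fraction c i t\<bar>)"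
    by (rule sum_abs)
  also have "\<dots> \<le> (\<Sum>i\<in>A. \<bar>w i\<bar>)"
    using above_fraction_nonneg[of c _ t] above_fraction_le_1[of c _ t]
    by (intro sum_mono) (simp add: abs_mult mult_left_le)
  finally show ?thesis .
qed

lemma horizontal_segment_mem:
  fixes S :: "(real \<times> real) set"
  assumes "convex S" "(\<xi>1, t) \<in> S" "(\<xi>2, t) \<in> S" "\<xi>1 \<le> \<xi>" "\<xi> \<le> \<xi>2"
  shows "(\<xi>, t) \<in> S"
proof (cases "\<xi>1 = \<xi>2")
  case False
  define u where "u = (\<xi> - \<xi>1) / (\<xi>2 - \<xi>1)"
  have "0 \<le> u" "u \<le> 1"
    using assms False by (auto simp: u_def field_simps)
  then have "(1 - u) *\<^sub>R (\<xi>1, t) + u *\<^sub>R (\<xi>2, t) \<in> S"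
    using assms by (intro convexD_alt) auto
  moreover have "u * (\<xi>2 - \<xi>1) = \<xi> - \<xi>1"
    using False by (simp add: u_def)
  then have "(1 - u) * \<xi>1 + u * \<xi>2 = \<xi>"
    by (simp add: algebra_simps)
  ultimately show ?thesis
    by (simp add: algebra_simps)
qed (use assms in simp)

lemma vertical_chord_between_chains:
  fixes K :: "(real \<times> real) set" and x c :: "nat \<Rightarrow> real"
  assumes "convex K"
    and vertex_chords: "\<And>i. i \<in> {1..m} \<Longrightarrow> vertical_chord K (x i) (c i)"
    and j: "j \<in> {1..m}" and up: "mono_on {1..j} c" and down: "antimono_on {j..m} c"
    and t: "0 \<le> t" "t \<le> c j"
    and right: "x j + (\<Sum>i=j..<m. (x (Suc i) - x i) * above_fraction c i t) \<le> \<xi>"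
    and left: "\<xi> \<le> x j - (\<Sum>i=1..<j. (x (Suc i) - x i) * above_fraction c i t)"
  shows "vertical_chord K \<xi> t"
proof -
  let ?S = "{(x, t). vertical_chord K x t}"
  have "convex ?S"
    using \<open>convex K\<close> by (rule convex_vertical_chords)
  have shorten: "(\<eta>, s') \<in> ?S" if "(\<eta>, s) \<in> ?S" "0 \<le> s'" "s' \<le> s" for \<eta> s s'
    using vertical_chord_shorten[OF \<open>convex K\<close>] that by auto
  have "(x j - (\<Sum>i=1..<j. (x (Suc i) - x i) * above_fraction c i t), t) \<in> ?S"
    by (rule ascending_chain_point_mem[OF \<open>convex ?S\<close> shorten]) (use vertex_chords j up t in auto)
  moreover have "(x j + (\<Sum>i=j..<m. (x (Suc i) - x i) * above_fraction c i t), t) \<in> ?S"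
    by (rule descending_chain_point_mem[OF \<open>convex ?S\<close> shorten]) (use vertex_chords j down t in auto)
  ultimately have "(\<xi>, t) \<in> ?S"
    using horizontal_segment_mem[OF \<open>convex ?S\<close>] left right by blast
  then show ?thesis
    by simp
qed

lemma vertical_chord_convex_hull_gamma_vertices:
  assumes "i \<in> {1..m}" "a i - b i = (0, c)"
  shows "vertical_chord (convex hull (poly_curve (gamma_vertices m a b))) (fst (b i)) c"
proof -
  have "{a i, b i} \<subseteq> set (gamma_vertices m a b)"
    using assms(1) by (simp add: set_gamma_vertices)
  then have "{a i, b i} \<subseteq> convex hull (poly_curve (gamma_vertices m a b))"
    by (meson hull_subset order_trans set_subset_poly_curve)
  moreover have "a i = (fst (b i), snd (b i) + c)"
    using assms(2) by (simp add: prod_eq_iff algebra_simps)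
  ultimately show ?thesis
    unfolding vertical_chord_def by (intro exI[of _ "snd (b i)"]) simp
qed

lemma unimodal_le_peak:
  fixes c :: "nat \<Rightarrow> 'a::linorder"
  assumes "mono_on {1..j} c" "antimono_on {j..m} c" "j \<in> {1..m}" "i \<in> {1..m}"
  shows "c i \<le> c j"
  using mono_onD[OF assms(1)] monotone_onD[OF assms(2)] assms(3,4) by (cases "i \<le> j") auto

lemma poly_area_le_measure_convex_hull_vertical:
  fixes a b :: "nat \<Rightarrow> real \<times> real" and c :: "nat \<Rightarrow> real"
  assumes m: "1 \<le> m"
    and vertical: "\<And>i. i \<in> {1..m} \<Longrightarrow> a i - b i = (0, c i)"
    and c_nonneg: "\<And>i. i \<in> {1..m} \<Longrightarrow> 0 \<le> c i"
    and j: "j \<in> {1..m}" and up: "mono_on {1..j} c" and down: "antimono_on {j..m} c"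
  shows "poly_area (gamma_vertices m a b)
           \<le> measure lebesgue (convex hull (poly_curve (gamma_vertices m a b)))"
proof -
  define K where "K = convex hull (poly_curve (gamma_vertices m a b))"
  define x where "x i = fst (b i)" for i
  define P where "P t = x j - (\<Sum>i=1..<j. (x (Suc i) - x i) * above_fraction c i t)" for t
  define Q where "Q t = x j + (\<Sum>i=j..<m. (x (Suc i) - x i) * above_fraction c i t)" for t
  have K: "compact K" "convex K"
    by (simp_all add: K_def compact_convex_hull compact_poly_curve)
  have vertex_chords: "vertical_chord K (x i) (c i)" if "i \<in> {1..m}" for i
    unfolding K_def x_def using that vertical[OF that] by (rule vertical_chord_convex_hull_gamma_vertices)
  have width: "P t - Q t = (\<Sum>i=1..<m. (x i - x (Suc i)) * above_fraction c i t)" for t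
  proof -
    have "(\<Sum>i=1..<j. (x (Suc i) - x i) * above_fraction c i t)
        + (\<Sum>i=j..<m. (x (Suc i) - x i) * above_fraction c i t)
        = (\<Sum>i=1..<m. (x (Suc i) - x i) * above_fraction c i t)"
      using j by (intro sum.atLeastLessThan_concat) auto
    then have "P t - Q t = - (\<Sum>i=1..<m. (x (Suc i) - x i) * above_fraction c i t)"
      unfolding P_def Q_def by linarith
    then show ?thesis
      by (simp add: sum_negf[symmetric] left_diff_distrib)
  qed
  show ?thesis
    unfolding K_def[symmetric]
  proof (rule chord_width_integral_le_measure[OF K])
    show "P \<in> borel_measurable borel" "Q \<in> borel_measurable borel"
      unfolding P_def Q_def by measurable
    show "vertical_chord K \<xi> t" if "t \<in> {0..c j}" "Q t \<le> \<xi>" "\<xi> \<le> P t" for t \<xi>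
      using that unfolding P_def Q_def
      by (intro vertical_chord_between_chains[OF K(2) vertex_chords j up down]) auto
    have area: "poly_area (gamma_vertices m a b) = (\<Sum>i=1..<m. (x i - x (Suc i)) * ((c i + c (Suc i)) / 2))"
      unfolding x_def by (rule poly_area_gamma_vertices_vertical[OF m vertical])
    show "((\<lambda>t. P t - Q t) has_integral poly_area (gamma_vertices m a b)) {0..c j}"
      unfolding width area using c_nonneg unimodal_le_peak[OF up down j]
      by (intro sum_above_fraction_has_integral) auto
    show "\<bar>P t - Q t\<bar> \<le> (\<Sum>i=1..<m. \<bar>x i - x (Suc i)\<bar>)" for t
      unfolding width by (rule abs_sum_above_fraction_le)
  qed
qed

lemma poly_area_le_measure_convex_hull_parallel:
  fixes a b :: "nat \<Rightarrow> real \<times> real" and c :: "nat \<Rightarrow> real" and d :: "real \<times> real"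
  assumes m: "1 \<le> m" and "d \<noteq> 0"
    and parallel: "\<And>i. i \<in> {1..m} \<Longrightarrow> a i - b i = c i *\<^sub>R d"
    and c_nonneg: "\<And>i. i \<in> {1..m} \<Longrightarrow> 0 \<le> c i"
    and j: "j \<in> {1..m}" and up: "mono_on {1..j} c" and down: "antimono_on {j..m} c"
  shows "poly_area (gamma_vertices m a b)
           \<le> measure lebesgue (convex hull (poly_curve (gamma_vertices m a b)))"
proof -
  obtain f where f: "area_preserving f" "f d = (0, 1)"
    using area_preserving_to_vertical[OF \<open>d \<noteq> 0\<close>] by blast
  have "(f \<circ> a) i - (f \<circ> b) i = (0, c i)" if "i \<in> {1..m}" for i
    using parallel[OF that] f
    by (simp add: linear_diff[OF area_preservingD(1)[OF f(1)], symmetric]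
        linear_cmul[OF area_preservingD(1)[OF f(1)]])
  then have "poly_area (gamma_vertices m (f \<circ> a) (f \<circ> b))
      \<le> measure lebesgue (convex hull (poly_curve (gamma_vertices m (f \<circ> a) (f \<circ> b))))"
    using poly_area_le_measure_convex_hull_vertical[OF m _ c_nonneg j up down] by blast
  then show ?thesis
    by (simp add: gamma_vertices_comp poly_area_map area_preservingD(2)[OF f(1)]
        measure_convex_hull_poly_curve_map[OF f(1)])
qed

theorem lemma4p2:
  fixes m :: nat and a b :: "nat \<Rightarrow> real \<times> real"
  assumes m: "m \<ge> 1"
    and same_dir: "\<exists>d. d \<noteq> 0 \<and>
        (\<forall>i\<in>{1..m}. \<exists>c. a i - b i = c *\<^sub>R d \<and>
            (c > 0 \<or> (c = 0 \<and> (i = 1 \<or> i = m))))"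
    and unimodal: "\<exists>j\<in>{1..m}.
        (\<forall>i k. 1 \<le> i \<and> i \<le> k \<and> k \<le> j \<longrightarrow> norm (a i - b i) \<le> norm (a k - b k)) \<and>
        (\<forall>i k. j \<le> i \<and> i \<le> k \<and> k \<le> m \<longrightarrow> norm (a k - b k) \<le> norm (a i - b i))"
  shows "poly_area (gamma_vertices m a b)
           \<le> measure lebesgue (convex hull (poly_curve (gamma_vertices m a b)))"
proof -
  obtain d where "d \<noteq> 0"
    and "\<forall>i\<in>{1..m}. \<exists>c. a i - b i = c *\<^sub>R d \<and> (c > 0 \<or> (c = 0 \<and> (i = 1 \<or> i = m)))"
    using same_dir by blast
  (* Only the nonnegativity of the coefficients is needed. *)
  then have "\<forall>i\<in>{1..m}. \<exists>c. a i - b i = c *\<^sub>R d \<and> 0 \<le> c"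
    by force
  then obtain c where c: "\<And>i. i \<in> {1..m} \<Longrightarrow> a i - b i = c i *\<^sub>R d \<and> 0 \<le> c i"
    by metis
  have norm_eq: "norm (a i - b i) = norm d * c i" if "i \<in> {1..m}" for i
    using c[OF that] by simp
  obtain j where j: "j \<in> {1..m}"
    and up: "\<forall>i k. 1 \<le> i \<and> i \<le> k \<and> k \<le> j \<longrightarrow> norm (a i - b i) \<le> norm (a k - b k)"
    and down: "\<forall>i k. j \<le> i \<and> i \<le> k \<and> k \<le> m \<longrightarrow> norm (a k - b k) \<le> norm (a i - b i)"
    using unimodal by blast
  have "mono_on {1..j} c"
    using up j \<open>d \<noteq> 0\<close> by (intro monotone_onI) (auto simp: norm_eq)
  moreover have "antimono_on {j..m} c"
    using down j \<open>d \<noteq> 0\<close> by (intro monotone_onI) (auto simp: norm_eq)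
  ultimately show ?thesis
    using c j \<open>d \<noteq> 0\<close> m by (intro poly_area_le_measure_convex_hull_parallel) auto
qed

end
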